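(* Let $G=(\pi,R)$ be a monogamy-of-entanglement game whose question set $X$ satisfies $|X|=2$. Then $\omega(G)=\omega^\ast(G)$.
   Context: A monogamy-of-entanglement game $G=(\pi,R)$ consists of a finite nonempty question set $X$, a probability distribution $\pi$ on $X$, a finite nonempty answer set $A$, a positive integer $m$, and positive semidefinite $m\times m$ matrices $R(a|x)$ ($a\in A$, $x\in X$) with $\sum_{a\in A}R(a|x)=\mathbb{1}$ for each $x$. The quantum value $\omega^\ast(G)$ is the supremum, over all finite-dimensional complex Hilbert spaces $\mathcal{A},\mathcal{B}$, all density operators $\rho$ on $\mathbb{C}^m\otimes\mathcal{A}\otimes\mathcal{B}$, and all families of POVMs $\{A^x_a:a\in A\}$ on $\mathcal{A}$ and $\{B^x_a:a\in A\}$ on $\mathcal{B}$ (one for each $x\in X$), of $\sum_{x\in X}\pi(x)\sum_{a\in A}\mathrm{Tr}\big((R(a|x)\otimes A^x_a\otimes B^x_a)\rho\big)$. The unentangled value $\omega(G)$ is the same supremum restricted to fully separable states $\rho=\sum_j p_j\rho^R_j\otimes\rho^A_j\otimes\rho^B_j$; it equals $\max_{f:X\to A}\big\|\sum_{x\in X}\pi(x)R(f(x)|x)\big\|$, where $\|\cdot\|$ is the operator (spectral) norm. *)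

theory Defs
  imports "Jordan_Normal_Form.Matrix"
begin

definition adj :: "complex mat \<Rightarrow> complex mat" where
  "adj A = mat (dim_col A) (dim_row A) (\<lambda>(i,j). cnj (A $$ (j,i)))"

definition mtrace :: "complex mat \<Rightarrow> complex" where
  "mtrace A = (\<Sum>i<dim_row A. A $$ (i,i))"

definition kron :: "complex mat \<Rightarrow> complex mat \<Rightarrow> complex mat" where
  "kron A B = mat (dim_row A * dim_row B) (dim_col A * dim_col B)
     (\<lambda>(i,j). A $$ (i div dim_row B, j div dim_col B) * B $$ (i mod dim_row B, j mod dim_col B))"

definition psd :: "nat \<Rightarrow> complex mat \<Rightarrow> bool" where
  "psd n A \<longleftrightarrow> A \<in> carrier_mat n n \<and> adj A = A \<and>
     (\<forall>v \<in> carrier_vec n. let q = (\<Sum>i<n. \<Sum>j<n. cnj (v $ i) * A $$ (i,j) * v $ j)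
                           in Im q = 0 \<and> Re q \<ge> 0)"

definition density :: "nat \<Rightarrow> complex mat \<Rightarrow> bool" where
  "density n \<rho> \<longleftrightarrow> psd n \<rho> \<and> mtrace \<rho> = 1"

definition msum :: "nat \<Rightarrow> 'i set \<Rightarrow> ('i \<Rightarrow> complex mat) \<Rightarrow> complex mat" where
  "msum n S f = mat n n (\<lambda>(i,j). \<Sum>s\<in>S. f s $$ (i,j))"

definition povm :: "nat \<Rightarrow> 'a set \<Rightarrow> ('a \<Rightarrow> complex mat) \<Rightarrow> bool" where
  "povm d Ans P \<longleftrightarrow> (\<forall>a\<in>Ans. psd d (P a)) \<and> msum d Ans P = 1\<^sub>m d"

text \<open>Monogamy-of-entanglement game G = (pi, R) with question set X, answer set Ans,
  referee dimension m and measurement operators R a x.\<close>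
definition moe_game :: "'x set \<Rightarrow> ('x \<Rightarrow> real) \<Rightarrow> 'a set \<Rightarrow> nat \<Rightarrow> ('a \<Rightarrow> 'x \<Rightarrow> complex mat) \<Rightarrow> bool" where
  "moe_game X \<pi> Ans m R \<longleftrightarrow> finite X \<and> X \<noteq> {} \<and> finite Ans \<and> Ans \<noteq> {} \<and> m > 0 \<and>
     (\<forall>x\<in>X. \<pi> x \<ge> 0) \<and> (\<Sum>x\<in>X. \<pi> x) = 1 \<and>
     (\<forall>x\<in>X. povm m Ans (\<lambda>a. R a x))"

definition win_prob :: "'x set \<Rightarrow> ('x \<Rightarrow> real) \<Rightarrow> 'a set \<Rightarrow> ('a \<Rightarrow> 'x \<Rightarrow> complex mat)
    \<Rightarrow> ('x \<Rightarrow> 'a \<Rightarrow> complex mat) \<Rightarrow> ('x \<Rightarrow> 'a \<Rightarrow> complex mat) \<Rightarrow> complex mat \<Rightarrow> real" where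
  "win_prob X \<pi> Ans R Aop Bop \<rho> =
     (\<Sum>x\<in>X. \<pi> x * (\<Sum>a\<in>Ans. Re (mtrace (kron (kron (R a x) (Aop x a)) (Bop x a) * \<rho>))))"

definition strategy :: "'x set \<Rightarrow> 'a set \<Rightarrow> nat \<Rightarrow> nat \<Rightarrow> nat \<Rightarrow>
    ('x \<Rightarrow> 'a \<Rightarrow> complex mat) \<Rightarrow> ('x \<Rightarrow> 'a \<Rightarrow> complex mat) \<Rightarrow> complex mat \<Rightarrow> bool" where
  "strategy X Ans m dA dB Aop Bop \<rho> \<longleftrightarrow>
     density (m * dA * dB) \<rho> \<and> (\<forall>x\<in>X. povm dA Ans (Aop x)) \<and> (\<forall>x\<in>X. povm dB Ans (Bop x))"

definition fully_separable :: "nat \<Rightarrow> nat \<Rightarrow> nat \<Rightarrow> complex mat \<Rightarrow> bool" where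
  "fully_separable m dA dB \<rho> \<longleftrightarrow>
     (\<exists>(k::nat) p \<rho>R \<rho>A \<rho>B. (\<forall>j<k. p j \<ge> (0::real)) \<and> (\<Sum>j<k. p j) = 1 \<and>
        (\<forall>j<k. density m (\<rho>R j) \<and> density dA (\<rho>A j) \<and> density dB (\<rho>B j)) \<and>
        \<rho> = msum (m * dA * dB) {..<k} (\<lambda>j. complex_of_real (p j) \<cdot>\<^sub>m kron (kron (\<rho>R j) (\<rho>A j)) (\<rho>B j)))"

definition quantum_value :: "'x set \<Rightarrow> ('x \<Rightarrow> real) \<Rightarrow> 'a set \<Rightarrow> nat \<Rightarrow> ('a \<Rightarrow> 'x \<Rightarrow> complex mat) \<Rightarrow> real" where
  "quantum_value X \<pi> Ans m R =
     Sup {win_prob X \<pi> Ans R Aop Bop \<rho> | dA dB Aop Bop \<rho>. strategy X Ans m dA dB Aop Bop \<rho>}"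

definition unentangled_value :: "'x set \<Rightarrow> ('x \<Rightarrow> real) \<Rightarrow> 'a set \<Rightarrow> nat \<Rightarrow> ('a \<Rightarrow> 'x \<Rightarrow> complex mat) \<Rightarrow> real" where
  "unentangled_value X \<pi> Ans m R =
     Sup {win_prob X \<pi> Ans R Aop Bop \<rho> | dA dB Aop Bop \<rho>.
            strategy X Ans m dA dB Aop Bop \<rho> \<and> fully_separable m dA dB \<rho>}"

end

theory Submission
  imports Defs
begin

text \<open>Write p0, p1 for the probabilities of the two questions x0, x1 and let V be the supremum of
  p0 <h, R(c|x0) h> + p1 <h, R(b|x1) h> over answers c, b and unit vectors h. A referee in the pure
  state h, together with players who hold one-dimensional systems and answer c and b, wins with exactly
  this probability, so V is at most the unentangled value. Conversely, for every vector f of the joint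
  system the operator inequalities B(c|x0) \<le> 1 = \<Sum>b. B(b|x1) and A(b|x1) \<le> 1 = \<Sum>c. A(c|x0) give
    p0 \<Sum>c. <f, R(c|x0) \<otimes> A(c|x0) \<otimes> B(c|x0) f> + p1 \<Sum>b. <f, R(b|x1) \<otimes> A(b|x1) \<otimes> B(b|x1) f>
      \<le> \<Sum>c b. <f, (p0 R(c|x0) + p1 R(b|x1)) \<otimes> A(c|x0) \<otimes> B(b|x1) f>
      \<le> V \<Sum>c b. <f, 1 \<otimes> A(c|x0) \<otimes> B(b|x1) f> = V |f|^2,
  and writing an arbitrary state as a sum of rank-one matrices bounds every strategy by V.
  The positivity of tensor products used here comes from the same rank-one decomposition of positive
  semidefinite matrices, obtained by Cholesky-type elimination.\<close>

definition qform :: "nat \<Rightarrow> complex mat \<Rightarrow> (nat \<Rightarrow> complex) \<Rightarrow> complex" where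
  "qform n A f = (\<Sum>i<n. \<Sum>j<n. cnj (f i) * A $$ (i,j) * f j)"

definition norm2 :: "nat \<Rightarrow> (nat \<Rightarrow> complex) \<Rightarrow> real" where
  "norm2 n f = (\<Sum>i<n. (cmod (f i))\<^sup>2)"

definition hermitian :: "nat \<Rightarrow> complex mat \<Rightarrow> bool" where
  "hermitian n A \<longleftrightarrow> (\<forall>i<n. \<forall>j<n. A $$ (i,j) = cnj (A $$ (j,i)))"

definition rank1 :: "nat \<Rightarrow> (nat \<Rightarrow> complex) \<Rightarrow> complex mat" where
  "rank1 n h = mat n n (\<lambda>(i,j). h i * cnj (h j))"

lemma rank1_carrier [simp]: "rank1 n h \<in> carrier_mat n n"
  unfolding rank1_def by simp

lemma msum_carrier [simp]: "msum n S F \<in> carrier_mat n n"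
  unfolding msum_def by simp

lemma msum_dims [simp]: "dim_row (msum n S F) = n" "dim_col (msum n S F) = n"
  unfolding msum_def by simp_all

lemma msum_index: "i < n \<Longrightarrow> j < n \<Longrightarrow> msum n S F $$ (i,j) = (\<Sum>s\<in>S. F s $$ (i,j))"
  unfolding msum_def by simp

lemma msum_lessThan_Suc:
  assumes "F K \<in> carrier_mat n n"
  shows "msum n {..<Suc K} F = msum n {..<K} F + F K"
  by (rule eq_matI) (use assms in \<open>auto simp: msum_index\<close>)

lemma if_zero_distrib:
  fixes a x :: "'a :: {mult_zero, comm_monoid_add}"
  shows "x * (if P then a else 0) = (if P then x * a else 0)"
    "(if P then a else 0) * x = (if P then a * x else 0)"
    "cnj (if P then c else 0) = (if P then cnj c else 0)"
    "(\<Sum>j\<in>S. if P then g j else 0) = (if P then (\<Sum>j\<in>S. g j) else 0)"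
  by auto

lemma norm2_nonneg: "norm2 n f \<ge> 0"
  unfolding norm2_def by (simp add: sum_nonneg)

lemma sum_cnj_mult_self: "(\<Sum>i\<in>S. cnj (f i) * f i) = complex_of_real (\<Sum>i\<in>S. (cmod (f i))\<^sup>2)"
  unfolding of_real_sum by (intro sum.cong refl) (metis complex_norm_square mult.commute of_real_power)

lemma psd_carrier: "psd n A \<Longrightarrow> A \<in> carrier_mat n n"
  unfolding psd_def by simp

lemma psd_qform:
  assumes "psd n A"
  shows "Im (qform n A f) = 0" "Re (qform n A f) \<ge> 0"
proof -
  let ?v = "vec n f"
  have "qform n A f = (\<Sum>i<n. \<Sum>j<n. cnj (?v $ i) * A $$ (i,j) * ?v $ j)"
    unfolding qform_def by (intro sum.cong refl) auto
  moreover have "Im (\<Sum>i<n. \<Sum>j<n. cnj (?v $ i) * A $$ (i,j) * ?v $ j) = 0 \<and>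
      Re (\<Sum>i<n. \<Sum>j<n. cnj (?v $ i) * A $$ (i,j) * ?v $ j) \<ge> 0"
    using assms vec_carrier[of n f] unfolding psd_def Let_def by blast
  ultimately show "Im (qform n A f) = 0" "Re (qform n A f) \<ge> 0" by simp_all
qed

lemma psd_hermitian:
  assumes "psd n A"
  shows "hermitian n A"
  unfolding hermitian_def
proof (intro allI impI)
  fix i j assume "i < n" "j < n"
  then have "adj A $$ (i,j) = cnj (A $$ (j,i))"
    using psd_carrier[OF assms] unfolding adj_def by simp
  then show "A $$ (i,j) = cnj (A $$ (j,i))"
    using assms unfolding psd_def by simp
qed

lemma psdI:
  assumes carrier: "A \<in> carrier_mat n n" and herm: "hermitian n A"
    and form: "\<And>f. Im (qform n A f) = 0 \<and> Re (qform n A f) \<ge> 0"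
  shows "psd n A"
proof -
  have "adj A = A"
  proof (rule eq_matI)
    fix i j assume "i < dim_row A" "j < dim_col A"
    then have ij: "i < n" "j < n" using carrier by auto
    then have "A $$ (j,i) = cnj (A $$ (i,j))" using herm unfolding hermitian_def by blast
    then show "adj A $$ (i,j) = A $$ (i,j)" using ij carrier unfolding adj_def by simp
  qed (use carrier in \<open>auto simp: adj_def\<close>)
  moreover have "\<forall>v \<in> carrier_vec n.
      let q = (\<Sum>i<n. \<Sum>j<n. cnj (v $ i) * A $$ (i,j) * v $ j) in Im q = 0 \<and> Re q \<ge> 0"
    using form unfolding Let_def qform_def by blast
  ultimately show ?thesis using carrier unfolding psd_def by blast
qed

lemma qform_add:
  "A \<in> carrier_mat n n \<Longrightarrow> B \<in> carrier_mat n n \<Longrightarrow> qform n (A + B) f = qform n A f + qform n B f"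
  unfolding qform_def by (simp add: sum.distrib[symmetric] algebra_simps)

lemma qform_diff:
  "A \<in> carrier_mat n n \<Longrightarrow> B \<in> carrier_mat n n \<Longrightarrow> qform n (A - B) f = qform n A f - qform n B f"
  unfolding qform_def by (simp add: sum_subtractf[symmetric] algebra_simps)

lemma qform_smult: "A \<in> carrier_mat n n \<Longrightarrow> qform n (c \<cdot>\<^sub>m A) f = c * qform n A f"
  unfolding qform_def by (simp add: sum_distrib_left algebra_simps)

lemma norm2_scale: "norm2 n (\<lambda>i. c * f i) = (cmod c)\<^sup>2 * norm2 n f"
  unfolding norm2_def by (simp add: norm_mult power_mult_distrib sum_distrib_left)

lemma qform_scale: "qform n A (\<lambda>i. c * f i) = cnj c * c * qform n A f"
  unfolding qform_def by (simp add: sum_distrib_left algebra_simps)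

lemma qform_msum: "qform n (msum n S F) f = (\<Sum>s\<in>S. qform n (F s) f)"
proof -
  have "qform n (msum n S F) f = (\<Sum>i<n. \<Sum>j<n. \<Sum>s\<in>S. cnj (f i) * F s $$ (i,j) * f j)"
    unfolding qform_def
    by (intro sum.cong refl) (simp add: msum_index sum_distrib_left sum_distrib_right)
  also have "\<dots> = (\<Sum>i<n. \<Sum>s\<in>S. \<Sum>j<n. cnj (f i) * F s $$ (i,j) * f j)"
    by (intro sum.cong refl) (rule sum.swap)
  also have "\<dots> = (\<Sum>s\<in>S. \<Sum>i<n. \<Sum>j<n. cnj (f i) * F s $$ (i,j) * f j)"
    by (rule sum.swap)
  finally show ?thesis unfolding qform_def .
qed

lemma qform_one: "qform n (1\<^sub>m n) f = complex_of_real (norm2 n f)"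
proof -
  have "qform n (1\<^sub>m n) f = (\<Sum>i<n. cnj (f i) * f i)"
    unfolding qform_def by (simp add: if_zero_distrib)
  then show ?thesis unfolding norm2_def sum_cnj_mult_self .
qed

lemma qform_rank1: "qform n (rank1 n h) g = complex_of_real ((cmod (\<Sum>i<n. cnj (g i) * h i))\<^sup>2)"
proof -
  have "qform n (rank1 n h) g = (\<Sum>i<n. \<Sum>j<n. (cnj (g i) * h i) * cnj (cnj (g j) * h j))"
    unfolding qform_def rank1_def by (intro sum.cong refl) (simp add: algebra_simps)
  also have "\<dots> = (\<Sum>i<n. cnj (g i) * h i) * cnj (\<Sum>i<n. cnj (g i) * h i)"
    by (simp only: sum_product cnj_sum)
  finally show ?thesis by (simp only: complex_norm_square)
qed

lemma qform_eq_0_if_norm2_eq_0: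
  assumes "norm2 n h = 0"
  shows "qform n A h = 0"
proof -
  have "h i = 0" if "i < n" for i
    using assms that unfolding norm2_def by (subst (asm) sum_nonneg_eq_0_iff) auto
  then show ?thesis unfolding qform_def by simp
qed

lemma psd_one: "psd n (1\<^sub>m n)"
  by (rule psdI) (auto simp: hermitian_def qform_one norm2_nonneg)

lemma psd_zero: "psd n (0\<^sub>m n n)"
  by (rule psdI) (auto simp: hermitian_def qform_def)

lemma psd_rank1: "psd n (rank1 n h)"
  by (rule psdI) (auto simp: hermitian_def qform_rank1, simp add: rank1_def)

lemma psd_add:
  assumes A: "psd n A" and B: "psd n B"
  shows "psd n (A + B)"
proof (rule psdI)
  have cA: "A \<in> carrier_mat n n" and cB: "B \<in> carrier_mat n n" using A B psd_carrier by auto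
  then show "A + B \<in> carrier_mat n n" by simp
  show "hermitian n (A + B)"
    unfolding hermitian_def
  proof (intro allI impI)
    fix i j assume ij: "i < n" "j < n"
    have "A $$ (i,j) = cnj (A $$ (j,i))" "B $$ (i,j) = cnj (B $$ (j,i))"
      using psd_hermitian[OF A] psd_hermitian[OF B] ij unfolding hermitian_def by blast+
    then show "(A + B) $$ (i,j) = cnj ((A + B) $$ (j,i))" using ij cA cB by simp
  qed
qed (use psd_qform[OF A] psd_qform[OF B] psd_carrier[OF A] psd_carrier[OF B] in \<open>simp add: qform_add\<close>)

lemma psd_smult:
  assumes A: "psd n A" and c: "c \<ge> 0"
  shows "psd n (complex_of_real c \<cdot>\<^sub>m A)"
proof (rule psdI)
  have cA: "A \<in> carrier_mat n n" using psd_carrier[OF A] .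
  then show "complex_of_real c \<cdot>\<^sub>m A \<in> carrier_mat n n" by simp
  show "hermitian n (complex_of_real c \<cdot>\<^sub>m A)"
    unfolding hermitian_def
  proof (intro allI impI)
    fix i j assume ij: "i < n" "j < n"
    have "A $$ (i,j) = cnj (A $$ (j,i))"
      using psd_hermitian[OF A] ij unfolding hermitian_def by blast
    then show "(complex_of_real c \<cdot>\<^sub>m A) $$ (i,j) = cnj ((complex_of_real c \<cdot>\<^sub>m A) $$ (j,i))"
      using ij cA by simp
  qed
qed (use psd_qform[OF A] psd_carrier[OF A] c in \<open>simp add: qform_smult\<close>)

lemma psd_smult_one_diff:
  assumes P: "psd m P" and bound: "\<And>h. Re (qform m P h) \<le> V * norm2 m h"
  shows "psd m (complex_of_real V \<cdot>\<^sub>m 1\<^sub>m m - P)"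
proof (rule psdI)
  have cP: "P \<in> carrier_mat m m" using psd_carrier[OF P] .
  show "complex_of_real V \<cdot>\<^sub>m 1\<^sub>m m - P \<in> carrier_mat m m" using cP by (intro minus_carrier_mat) simp
  show "hermitian m (complex_of_real V \<cdot>\<^sub>m 1\<^sub>m m - P)"
    unfolding hermitian_def
  proof (intro allI impI)
    fix i j assume ij: "i < m" "j < m"
    have "P $$ (i,j) = cnj (P $$ (j,i))"
      using psd_hermitian[OF P] ij unfolding hermitian_def by blast
    then show "(complex_of_real V \<cdot>\<^sub>m 1\<^sub>m m - P) $$ (i,j) = cnj ((complex_of_real V \<cdot>\<^sub>m 1\<^sub>m m - P) $$ (j,i))"
      using ij cP by auto
  qed
  fix h
  have "qform m (complex_of_real V \<cdot>\<^sub>m 1\<^sub>m m - P) h = complex_of_real (V * norm2 m h) - qform m P h"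
    using cP by (simp add: qform_diff qform_smult qform_one)
  then show "Im (qform m (complex_of_real V \<cdot>\<^sub>m 1\<^sub>m m - P) h) = 0 \<and>
      Re (qform m (complex_of_real V \<cdot>\<^sub>m 1\<^sub>m m - P) h) \<ge> 0"
    using psd_qform(1)[OF P] bound[of h] by simp
qed

lemma Re_qform_le_msum:
  assumes "finite S" "c \<in> S" "\<And>s. s \<in> S \<Longrightarrow> psd n (F s)"
  shows "Re (qform n (F c) f) \<le> Re (qform n (msum n S F) f)"
  unfolding qform_msum Re_sum
  by (rule member_le_sum) (use assms psd_qform(2) in auto)

section \<open>Decomposition into rank-one matrices\<close>

definition vanishes_before :: "nat \<Rightarrow> nat \<Rightarrow> complex mat \<Rightarrow> bool" where
  "vanishes_before n k A \<longleftrightarrow> (\<forall>i<n. \<forall>j<n. i < k \<or> j < k \<longrightarrow> A $$ (i,j) = 0)"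

lemma qform_shift:
  assumes herm: "hermitian n A" and k: "k < n"
  shows "qform n A (\<lambda>i. f i + (if i = k then t else 0)) =
    qform n A f + t * (\<Sum>i<n. cnj (f i) * A $$ (i,k)) + cnj t * cnj (\<Sum>i<n. cnj (f i) * A $$ (i,k))
      + cnj t * t * A $$ (k,k)"
proof -
  define e where "e = (\<lambda>i::nat. if i = k then t else 0)"
  have "qform n A (\<lambda>i. f i + e i) = (\<Sum>i<n. \<Sum>j<n. cnj (f i) * A$$(i,j) * f j + cnj (f i) * A$$(i,j) * e j
       + cnj (e i) * A$$(i,j) * f j + cnj (e i) * A$$(i,j) * e j)"
    unfolding qform_def by (intro sum.cong refl) (simp add: algebra_simps)
  also have "\<dots> = qform n A f + (\<Sum>i<n. \<Sum>j<n. cnj (f i) * A$$(i,j) * e j)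
       + (\<Sum>i<n. \<Sum>j<n. cnj (e i) * A$$(i,j) * f j) + (\<Sum>i<n. \<Sum>j<n. cnj (e i) * A$$(i,j) * e j)"
    unfolding qform_def by (simp add: sum.distrib)
  also have "(\<Sum>i<n. \<Sum>j<n. cnj (f i) * A$$(i,j) * e j) = t * (\<Sum>i<n. cnj (f i) * A $$ (i,k))"
    using k by (simp add: e_def sum_distrib_left if_zero_distrib algebra_simps)
  also have "(\<Sum>i<n. \<Sum>j<n. cnj (e i) * A$$(i,j) * f j) = cnj t * (\<Sum>j<n. A$$(k,j) * f j)"
    using k by (simp add: e_def sum_distrib_left if_zero_distrib algebra_simps)
  also have "(\<Sum>j<n. A$$(k,j) * f j) = cnj (\<Sum>i<n. cnj (f i) * A $$ (i,k))"
  proof -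
    have "A$$(k,j) = cnj (A$$(j,k))" if "j < n" for j
      using herm k that unfolding hermitian_def by blast
    then show ?thesis by (simp add: mult.commute)
  qed
  also have "(\<Sum>i<n. \<Sum>j<n. cnj (e i) * A$$(i,j) * e j) = cnj t * t * A $$ (k,k)"
    using k by (simp add: e_def if_zero_distrib algebra_simps)
  finally show ?thesis unfolding e_def by simp
qed

lemma psd_diag:
  assumes "psd n A" "k < n"
  shows "A $$ (k,k) = complex_of_real (Re (A $$ (k,k)))" "Re (A $$ (k,k)) \<ge> 0"
proof -
  have "qform n A (\<lambda>i. if i = k then 1 else 0) = A $$ (k,k)"
    using assms(2) unfolding qform_def by (simp add: if_zero_distrib)
  then have "Im (A $$ (k,k)) = 0" "Re (A $$ (k,k)) \<ge> 0"
    using psd_qform[OF assms(1), of "\<lambda>i. if i = k then 1 else 0"] by auto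
  then show "A $$ (k,k) = complex_of_real (Re (A $$ (k,k)))" "Re (A $$ (k,k)) \<ge> 0"
    by (auto simp: complex_eq_iff)
qed

lemma psd_zero_diag_col:
  assumes p: "psd n A" and k: "k < n" and zero: "A $$ (k,k) = 0" and j: "j < n"
  shows "A $$ (j,k) = 0"
proof (rule ccontr)
  assume nz: "A $$ (j,k) \<noteq> 0"
  define z where "z = A $$ (j,k)"
  define f where "f = (\<lambda>i::nat. if i = j then (1::complex) else 0)"
  define s where "s = (Re (A $$ (j,j)) + 1) / (cmod z)\<^sup>2"
  define t where "t = - complex_of_real s * cnj z"
  have zpos: "(cmod z)\<^sup>2 > 0" using nz unfolding z_def by simp
  have "qform n A (\<lambda>i. f i + (if i = k then t else 0)) = A $$ (j,j) + t * z + cnj t * cnj z"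
    using qform_shift[OF psd_hermitian[OF p] k, of f t] j zero
    unfolding f_def z_def by (simp add: qform_def if_zero_distrib)
  also have "\<dots> = A $$ (j,j) - complex_of_real (2 * s * (cmod z)\<^sup>2)"
    unfolding t_def by (simp add: algebra_simps complex_norm_square del: of_real_power)
  finally have "Re (A $$ (j,j)) \<ge> 2 * s * (cmod z)\<^sup>2"
    using psd_qform(2)[OF p, of "\<lambda>i. f i + (if i = k then t else 0)"] by simp
  moreover have "s * (cmod z)\<^sup>2 = Re (A $$ (j,j)) + 1" unfolding s_def using zpos by simp
  moreover have "Re (A $$ (j,j)) \<ge> 0" using psd_diag[OF p j] by simp
  ultimately show False by linarith
qed

lemma vanishes_before_Suc_of_zero_diag:
  assumes p: "psd n A" and k: "k < n" and zero: "A $$ (k,k) = 0" and van: "vanishes_before n k A"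
  shows "vanishes_before n (Suc k) A"
  unfolding vanishes_before_def
proof (intro allI impI)
  fix i j assume ij: "i < n" "j < n" and "i < Suc k \<or> j < Suc k"
  then consider "i < k \<or> j < k" | "j = k" | "i = k" by linarith
  then show "A $$ (i,j) = 0"
  proof cases
    case 3
    have "A $$ (k,j) = cnj (A $$ (j,k))"
      using psd_hermitian[OF p] ij k unfolding hermitian_def by blast
    then show ?thesis using psd_zero_diag_col[OF p k zero ij(2)] 3 by simp
  qed (use van ij psd_zero_diag_col[OF p k zero] in \<open>auto simp: vanishes_before_def\<close>)
qed

text \<open>One elimination step: the quadratic form of A - w w* at f equals that of A at f + t e_k
  with t = - <A e_k, f> / A k k, so it stays nonnegative, while row and column k are cleared.\<close>

lemma psd_diff_pivot:
  assumes p: "psd n A" and k: "k < n" and r: "A $$ (k,k) = complex_of_real r" and rpos: "r > 0"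
  defines "w \<equiv> (\<lambda>i. A $$ (i,k) / complex_of_real (sqrt r))"
  shows "psd n (A - rank1 n w)"
proof (rule psdI)
  have cA: "A \<in> carrier_mat n n" using psd_carrier[OF p] .
  show "A - rank1 n w \<in> carrier_mat n n" by (rule minus_carrier_mat) simp
  show "hermitian n (A - rank1 n w)"
    unfolding hermitian_def
  proof (intro allI impI)
    fix i j assume ij: "i < n" "j < n"
    have "A $$ (i,j) = cnj (A $$ (j,i))"
      using psd_hermitian[OF p] ij unfolding hermitian_def by blast
    then show "(A - rank1 n w) $$ (i,j) = cnj ((A - rank1 n w) $$ (j,i))"
      using ij cA by (simp add: rank1_def)
  qed
  fix f
  define z where "z = (\<Sum>i<n. cnj (f i) * A $$ (i,k))"
  define t where "t = - cnj z / complex_of_real r"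
  have "(\<Sum>i<n. cnj (f i) * w i) = z / complex_of_real (sqrt r)"
    unfolding w_def z_def by (simp add: sum_divide_distrib)
  then have "qform n (A - rank1 n w) f = qform n A f - complex_of_real ((cmod z)\<^sup>2 / r)"
    using cA rpos by (simp add: qform_diff qform_rank1 norm_divide power_divide)
  also have "\<dots> = qform n A (\<lambda>i. f i + (if i = k then t else 0))"
    unfolding qform_shift[OF psd_hermitian[OF p] k] z_def[symmetric] r t_def
    using rpos by (simp add: field_simps complex_norm_square del: of_real_power)
  finally show "Im (qform n (A - rank1 n w) f) = 0 \<and> Re (qform n (A - rank1 n w) f) \<ge> 0"
    using psd_qform[OF p] by metis
qed

lemma vanishes_before_diff_pivot:
  assumes p: "psd n A" and k: "k < n" and r: "A $$ (k,k) = complex_of_real r" and rpos: "r > 0"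
    and van: "vanishes_before n k A"
  defines "w \<equiv> (\<lambda>i. A $$ (i,k) / complex_of_real (sqrt r))"
  shows "vanishes_before n (Suc k) (A - rank1 n w)"
  unfolding vanishes_before_def
proof (intro allI impI)
  fix i j assume ij: "i < n" "j < n" and "i < Suc k \<or> j < Suc k"
  have cA: "A \<in> carrier_mat n n" using psd_carrier[OF p] .
  have wk: "w k = complex_of_real (sqrt r)"
    unfolding w_def r using rpos by (simp add: real_div_sqrt flip: of_real_divide)
  have herm: "A $$ (i',j') = cnj (A $$ (j',i'))" if "i' < n" "j' < n" for i' j'
    using psd_hermitian[OF p] that unfolding hermitian_def by blast
  have sq: "complex_of_real (sqrt r) * complex_of_real (sqrt r) = complex_of_real r"
    using rpos by (simp flip: of_real_mult)
  have entry: "(A - rank1 n w) $$ (i,j) = A $$ (i,j) - w i * cnj (w j)"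
    using ij cA by (simp add: rank1_def)
  from \<open>i < Suc k \<or> j < Suc k\<close> consider "i < k" | "j < k" | "i = k" | "j = k" by linarith
  then show "(A - rank1 n w) $$ (i,j) = 0"
  proof cases
    case 1
    then show ?thesis using van ij k unfolding entry by (simp add: w_def vanishes_before_def)
  next
    case 2
    then show ?thesis using van ij k unfolding entry by (simp add: w_def vanishes_before_def)
  next
    case 3
    then show ?thesis unfolding entry wk using herm[OF ij(2) k] rpos by (simp add: w_def r sq)
  next
    case 4
    then show ?thesis unfolding entry wk using rpos by (simp add: w_def r sq)
  qed
qed

lemma psd_rank1_decomposition_of_vanishes_before:
  assumes "psd n A" "vanishes_before n k A"
  shows "\<exists>(K::nat) w. A = msum n {..<K} (\<lambda>l. rank1 n (w l))"
  using assms
proof (induction "n - k" arbitrary: k A)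
  case 0
  then have "A = msum n {..<0::nat} (\<lambda>l. rank1 n (w l))" for w
    by (intro eq_matI) (auto simp: msum_index vanishes_before_def lessThan_0 dest: psd_carrier)
  then show ?case by blast
next
  case (Suc d)
  then have k: "k < n" and d: "d = n - Suc k" by auto
  show ?case
  proof (cases "A $$ (k,k) = 0")
    case True
    then show ?thesis
      using Suc.hyps(1)[OF d] Suc.prems vanishes_before_Suc_of_zero_diag[OF _ k] by blast
  next
    case False
    define r where "r = Re (A $$ (k,k))"
    have r: "A $$ (k,k) = complex_of_real r" using psd_diag(1)[OF Suc.prems(1) k] unfolding r_def .
    moreover have "r \<ge> 0" using psd_diag(2)[OF Suc.prems(1) k] unfolding r_def .
    ultimately have rpos: "r > 0" using False by force
    define w where "w = (\<lambda>i. A $$ (i,k) / complex_of_real (sqrt r))"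
    obtain K :: nat and v where Kv: "A - rank1 n w = msum n {..<K} (\<lambda>l. rank1 n (v l))"
      using Suc.hyps(1)[OF d] psd_diff_pivot[OF Suc.prems(1) k r rpos]
        vanishes_before_diff_pivot[OF Suc.prems(1) k r rpos Suc.prems(2)] unfolding w_def by blast
    have "A = msum n {..<K} (\<lambda>l. rank1 n (v l)) + rank1 n w"
      unfolding Kv[symmetric] using psd_carrier[OF Suc.prems(1)] by (intro eq_matI) (auto simp: rank1_def)
    also have "msum n {..<K} (\<lambda>l. rank1 n (v l)) = msum n {..<K} (\<lambda>l. rank1 n ((v(K := w)) l))"
      by (rule eq_matI) (auto simp: msum_index intro!: sum.cong)
    also have "\<dots> + rank1 n w = msum n {..<Suc K} (\<lambda>l. rank1 n ((v(K := w)) l))"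
      by (simp add: msum_lessThan_Suc)
    finally show ?thesis by blast
  qed
qed

lemma psd_rank1_decomposition:
  assumes "psd n A"
  shows "\<exists>(K::nat) w. A = msum n {..<K} (\<lambda>l. rank1 n (w l))"
  using psd_rank1_decomposition_of_vanishes_before[OF assms, of 0] by (simp add: vanishes_before_def)

lemma kron_dims [simp]:
  "dim_row (kron A B) = dim_row A * dim_row B" "dim_col (kron A B) = dim_col A * dim_col B"
  unfolding kron_def by simp_all

lemma kron_index:
  "i < dim_row A * dim_row B \<Longrightarrow> j < dim_col A * dim_col B \<Longrightarrow>
   kron A B $$ (i,j) = A $$ (i div dim_row B, j div dim_col B) * B $$ (i mod dim_row B, j mod dim_col B)"
  unfolding kron_def by simp

lemma kron_carrier:
  "A \<in> carrier_mat a a \<Longrightarrow> B \<in> carrier_mat b b \<Longrightarrow> kron A B \<in> carrier_mat (a*b) (a*b)"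
  by auto

lemma less_mult_imp_mod_less: "i < a * b \<Longrightarrow> i mod b < (b::nat)"
  by (metis mod_less_divisor mult_zero_right not_less_zero zero_less_iff_neq_zero)

lemma kron_msum_left:
  assumes B: "B \<in> carrier_mat b b" and F: "\<And>s. s \<in> S \<Longrightarrow> F s \<in> carrier_mat a a"
  shows "kron (msum a S F) B = msum (a*b) S (\<lambda>s. kron (F s) B)"
proof (rule eq_matI)
  fix i j assume "i < dim_row (msum (a*b) S (\<lambda>s. kron (F s) B))" "j < dim_col (msum (a*b) S (\<lambda>s. kron (F s) B))"
  then have ij: "i < a*b" "j < a*b" by auto
  then have "kron (msum a S F) B $$ (i,j) = (\<Sum>s\<in>S. F s $$ (i div b, j div b) * B $$ (i mod b, j mod b))"
    using B by (simp add: kron_index msum_index less_mult_imp_div_less sum_distrib_right)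
  also have "\<dots> = (\<Sum>s\<in>S. kron (F s) B $$ (i,j))"
    using B ij by (intro sum.cong refl) (simp add: kron_index carrier_matD[OF F])
  finally show "kron (msum a S F) B $$ (i,j) = msum (a*b) S (\<lambda>s. kron (F s) B) $$ (i,j)"
    using ij by (simp add: msum_index)
qed (use B in auto)

lemma kron_msum_right:
  assumes A: "A \<in> carrier_mat a a" and F: "\<And>s. s \<in> S \<Longrightarrow> F s \<in> carrier_mat b b"
  shows "kron A (msum b S F) = msum (a*b) S (\<lambda>s. kron A (F s))"
proof (rule eq_matI)
  fix i j assume "i < dim_row (msum (a*b) S (\<lambda>s. kron A (F s)))" "j < dim_col (msum (a*b) S (\<lambda>s. kron A (F s)))"
  then have ij: "i < a*b" "j < a*b" by auto
  then have "kron A (msum b S F) $$ (i,j) = (\<Sum>s\<in>S. A $$ (i div b, j div b) * F s $$ (i mod b, j mod b))"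
    using A by (simp add: kron_index msum_index less_mult_imp_mod_less sum_distrib_left)
  also have "\<dots> = (\<Sum>s\<in>S. kron A (F s) $$ (i,j))"
    using A ij by (intro sum.cong refl) (simp add: kron_index carrier_matD[OF F])
  finally show "kron A (msum b S F) $$ (i,j) = msum (a*b) S (\<lambda>s. kron A (F s)) $$ (i,j)"
    using ij by (simp add: msum_index)
qed (use A in auto)

lemma kron_add_left:
  assumes "A \<in> carrier_mat a a" "C \<in> carrier_mat a a" "B \<in> carrier_mat b b"
  shows "kron (A + C) B = kron A B + kron C B"
  by (rule eq_matI) (use assms in \<open>auto simp: kron_index less_mult_imp_div_less algebra_simps\<close>)

lemma kron_diff_left:
  assumes "A \<in> carrier_mat a a" "C \<in> carrier_mat a a" "B \<in> carrier_mat b b"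
  shows "kron (A - C) B = kron A B - kron C B"
  by (rule eq_matI) (use assms in \<open>auto simp: kron_index less_mult_imp_div_less algebra_simps\<close>)

lemma kron_smult_left:
  assumes "A \<in> carrier_mat a a" "B \<in> carrier_mat b b"
  shows "kron (c \<cdot>\<^sub>m A) B = c \<cdot>\<^sub>m kron A B"
  by (rule eq_matI) (use assms in \<open>auto simp: kron_index less_mult_imp_div_less algebra_simps\<close>)

lemma kron_one: "kron (1\<^sub>m a) (1\<^sub>m b) = 1\<^sub>m (a*b)"
proof (rule eq_matI)
  fix i j assume "i < dim_row (1\<^sub>m (a*b))" "j < dim_col (1\<^sub>m (a*b))"
  moreover have "(i div b = j div b \<and> i mod b = j mod b) \<longleftrightarrow> i = j"
    by (metis div_mult_mod_eq)
  ultimately show "kron (1\<^sub>m a) (1\<^sub>m b) $$ (i,j) = 1\<^sub>m (a*b) $$ (i,j)"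
    by (auto simp: kron_index less_mult_imp_div_less less_mult_imp_mod_less)
qed auto

lemma kron_one_right: "A \<in> carrier_mat a b \<Longrightarrow> kron A (1\<^sub>m 1) = A"
  by (rule eq_matI) (auto simp: kron_index)

lemma kron_zero_right: "A \<in> carrier_mat a a \<Longrightarrow> kron A (0\<^sub>m 1 1) = 0\<^sub>m a a"
  by (rule eq_matI) (auto simp: kron_index)

lemma sum_lessThan_mult: "(\<Sum>i<a*b. g i) = (\<Sum>r<a. \<Sum>c<(b::nat). g (r*b + c))"
  unfolding sum.nat_group[symmetric]
  by (rule sum.cong[OF refl]) (simp add: sum.atLeastLessThan_shift_0 atLeast0LessThan comp_def)

lemma qform_kron_rank1:
  assumes Q: "Q \<in> carrier_mat b b"
  shows "qform (a*b) (kron (rank1 a v) Q) f = qform b Q (\<lambda>c. \<Sum>r<a. cnj (v r) * f (r*b + c))"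
proof -
  define T where "T = (\<lambda>r c r' c'. cnj (f (r*b+c)) * v r * cnj (v r') * Q $$ (c,c') * f (r'*b+c'))"
  have rb: "r*b + c < a*b" if "r < a" "c < b" for r c
  proof -
    have "r*b + c < Suc r * b" using that by simp
    also have "\<dots> \<le> a*b" using that by (intro mult_right_mono) auto
    finally show ?thesis .
  qed
  have "qform (a*b) (kron (rank1 a v) Q) f = (\<Sum>r<a. \<Sum>c<b. \<Sum>r'<a. \<Sum>c'<b. T r c r' c')"
    unfolding qform_def sum_lessThan_mult
    by (intro sum.cong refl) (use Q rb in \<open>simp add: kron_index rank1_def T_def\<close>)
  also have "\<dots> = (\<Sum>c<b. \<Sum>c'<b. \<Sum>r<a. \<Sum>r'<a. T r c r' c')"
    by (subst sum.swap, rule sum.cong[OF refl], subst sum.swap, rule sum.cong[OF refl], subst sum.swap) simp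
  also have "\<dots> = qform b Q (\<lambda>c. \<Sum>r<a. cnj (v r) * f (r*b + c))"
    unfolding qform_def T_def
    by (intro sum.cong refl) (simp add: sum_distrib_left sum_distrib_right algebra_simps)
  finally show ?thesis .
qed

lemma psd_kron:
  assumes P: "psd a P" and Q: "psd b Q"
  shows "psd (a*b) (kron P Q)"
proof (rule psdI)
  have cP: "P \<in> carrier_mat a a" and cQ: "Q \<in> carrier_mat b b" using P Q psd_carrier by auto
  then show "kron P Q \<in> carrier_mat (a*b) (a*b)" by (rule kron_carrier)
  show "hermitian (a*b) (kron P Q)"
    unfolding hermitian_def
  proof (intro allI impI)
    fix i j assume ij: "i < a*b" "j < a*b"
    have "P $$ (i div b, j div b) = cnj (P $$ (j div b, i div b))"
      using psd_hermitian[OF P] ij less_mult_imp_div_less unfolding hermitian_def by blast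
    moreover have "Q $$ (i mod b, j mod b) = cnj (Q $$ (j mod b, i mod b))"
      using psd_hermitian[OF Q] ij less_mult_imp_mod_less unfolding hermitian_def by blast
    ultimately show "kron P Q $$ (i,j) = cnj (kron P Q $$ (j,i))"
      using ij cP cQ by (simp add: kron_index)
  qed
  fix f
  obtain K :: nat and w where "P = msum a {..<K} (\<lambda>l. rank1 a (w l))"
    using psd_rank1_decomposition[OF P] by blast
  then have "qform (a*b) (kron P Q) f = (\<Sum>l<K. qform b Q (\<lambda>c. \<Sum>r<a. cnj (w l r) * f (r*b + c)))"
    by (simp add: kron_msum_left[OF cQ] qform_msum qform_kron_rank1[OF cQ])
  then show "Im (qform (a*b) (kron P Q) f) = 0 \<and> Re (qform (a*b) (kron P Q) f) \<ge> 0"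
    using psd_qform[OF Q] by (simp add: Im_sum Re_sum sum_nonneg)
qed

lemma mtrace_mult:
  assumes "T \<in> carrier_mat n n" "M \<in> carrier_mat n n"
  shows "mtrace (T * M) = (\<Sum>i<n. \<Sum>j<n. T $$ (i,j) * M $$ (j,i))"
  using assms unfolding mtrace_def by (simp add: scalar_prod_def lessThan_atLeast0)

lemma mtrace_mult_msum:
  assumes T: "T \<in> carrier_mat n n" and F: "\<And>s. s \<in> S \<Longrightarrow> F s \<in> carrier_mat n n"
  shows "mtrace (T * msum n S F) = (\<Sum>s\<in>S. mtrace (T * F s))"
proof -
  have "mtrace (T * msum n S F) = (\<Sum>i<n. \<Sum>j<n. \<Sum>s\<in>S. T $$ (i,j) * F s $$ (j,i))"
    unfolding mtrace_mult[OF T msum_carrier] by (simp add: msum_index sum_distrib_left)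
  also have "\<dots> = (\<Sum>i<n. \<Sum>s\<in>S. \<Sum>j<n. T $$ (i,j) * F s $$ (j,i))"
    by (intro sum.cong refl) (rule sum.swap)
  also have "\<dots> = (\<Sum>s\<in>S. \<Sum>i<n. \<Sum>j<n. T $$ (i,j) * F s $$ (j,i))"
    by (rule sum.swap)
  also have "\<dots> = (\<Sum>s\<in>S. mtrace (T * F s))"
    by (intro sum.cong refl) (simp add: mtrace_mult[OF T F])
  finally show ?thesis .
qed

lemma mtrace_mult_rank1: "T \<in> carrier_mat n n \<Longrightarrow> mtrace (T * rank1 n h) = qform n T h"
  by (simp add: mtrace_mult qform_def rank1_def algebra_simps)

lemma mtrace_msum:
  assumes F: "\<And>s. s \<in> S \<Longrightarrow> F s \<in> carrier_mat n n"
  shows "mtrace (msum n S F) = (\<Sum>s\<in>S. mtrace (F s))"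
proof -
  have "mtrace (msum n S F) = (\<Sum>i<n. \<Sum>s\<in>S. F s $$ (i,i))"
    by (simp add: mtrace_def msum_index)
  also have "\<dots> = (\<Sum>s\<in>S. \<Sum>i<n. F s $$ (i,i))"
    by (rule sum.swap)
  finally show ?thesis
    by (simp add: mtrace_def carrier_matD[OF F] cong: sum.cong)
qed

lemma mtrace_zero: "mtrace (0\<^sub>m n n) = 0"
  unfolding mtrace_def by simp

lemma mtrace_rank1: "mtrace (rank1 n h) = complex_of_real (norm2 n h)"
  unfolding mtrace_def rank1_def norm2_def of_real_sum
  by (simp add: complex_norm_square del: of_real_power)

lemma Re_mtrace_mult_rank1_sum:
  "T \<in> carrier_mat n n \<Longrightarrow>
    Re (mtrace (T * msum n {..<K} (\<lambda>l. rank1 n (w l)))) = (\<Sum>l<K. Re (qform n T (w l)))"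
  by (simp add: mtrace_mult_msum mtrace_mult_rank1 Re_sum)

lemma density_rank1_decomposition:
  assumes "density n \<rho>"
  obtains K :: nat and w where "\<rho> = msum n {..<K} (\<lambda>l. rank1 n (w l))" "(\<Sum>l<K. norm2 n (w l)) = 1"
proof -
  obtain K :: nat and w where \<rho>: "\<rho> = msum n {..<K} (\<lambda>l. rank1 n (w l))"
    using psd_rank1_decomposition assms unfolding density_def by blast
  have "complex_of_real (\<Sum>l<K. norm2 n (w l)) = 1"
    using assms unfolding density_def \<rho> by (simp add: mtrace_msum mtrace_rank1)
  then show ?thesis using that[OF \<rho>] by (metis of_real_eq_1_iff)
qed

section \<open>An operator inequality for two questions\<close>

lemma povm_psd: "povm d Ans P \<Longrightarrow> a \<in> Ans \<Longrightarrow> psd d (P a)"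
  unfolding povm_def by blast

lemma povm_carrier: "povm d Ans P \<Longrightarrow> a \<in> Ans \<Longrightarrow> P a \<in> carrier_mat d d"
  by (rule psd_carrier[OF povm_psd])

lemma povm_msum: "povm d Ans P \<Longrightarrow> msum d Ans P = 1\<^sub>m d"
  unfolding povm_def by blast

lemma Re_qform_povm_le_norm2:
  assumes "povm n Ans P" "finite Ans" "a \<in> Ans"
  shows "Re (qform n (P a) h) \<le> norm2 n h"
  using Re_qform_le_msum[of Ans a n P h] povm_psd[OF assms(1)] assms(2,3)
  by (simp add: povm_msum[OF assms(1)] qform_one)

lemma kron_kron_povm_right:
  assumes R: "R \<in> carrier_mat m m" and A: "A \<in> carrier_mat dA dA" and B: "povm dB Ans B"
  shows "kron (kron R A) (1\<^sub>m dB) = msum (m*dA*dB) Ans (\<lambda>b. kron (kron R A) (B b))"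
proof -
  have "kron (kron R A) (msum dB Ans B) = msum (m*dA*dB) Ans (\<lambda>b. kron (kron R A) (B b))"
    by (rule kron_msum_right[OF kron_carrier[OF R A]]) (rule povm_carrier[OF B])
  then show ?thesis unfolding povm_msum[OF B] .
qed

lemma kron_kron_povm_middle:
  assumes R: "R \<in> carrier_mat m m" and B: "B \<in> carrier_mat dB dB" and A: "povm dA Ans A"
  shows "kron (kron R (1\<^sub>m dA)) B = msum (m*dA*dB) Ans (\<lambda>a. kron (kron R (A a)) B)"
proof -
  have "kron R (msum dA Ans A) = msum (m*dA) Ans (\<lambda>a. kron R (A a))"
    by (rule kron_msum_right[OF R]) (rule povm_carrier[OF A])
  moreover have "kron (msum (m*dA) Ans (\<lambda>a. kron R (A a))) B = msum (m*dA*dB) Ans (\<lambda>a. kron (kron R (A a)) B)"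
    by (rule kron_msum_left[OF B]) (rule kron_carrier[OF R povm_carrier[OF A]])
  ultimately show ?thesis unfolding povm_msum[OF A] by simp
qed

lemma Re_qform_le_of_msum_eq:
  assumes "finite S" "c \<in> S" "\<And>s. s \<in> S \<Longrightarrow> psd n (F s)" "msum n S F = msum n S G"
  shows "Re (qform n (F c) f) \<le> (\<Sum>s\<in>S. Re (qform n (G s) f))"
proof -
  have "Re (qform n (F c) f) \<le> Re (qform n (msum n S F) f)"
    by (rule Re_qform_le_msum) (use assms in auto)
  then show ?thesis unfolding assms(4) qform_msum Re_sum .
qed

lemma Re_qform_kron_kron_mono:
  assumes P: "P \<in> carrier_mat m m" and Q: "Q \<in> carrier_mat m m" and QP: "psd m (Q - P)"
    and A: "psd dA A" and B: "psd dB B"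
  shows "Re (qform (m*dA*dB) (kron (kron P A) B) f) \<le> Re (qform (m*dA*dB) (kron (kron Q A) B) f)"
proof -
  have cA: "A \<in> carrier_mat dA dA" and cB: "B \<in> carrier_mat dB dB" using A B psd_carrier by auto
  have "kron (kron (Q - P) A) B = kron (kron Q A) B - kron (kron P A) B"
    using P Q cA cB
    by (simp add: kron_diff_left[of _ m _ A dA] kron_diff_left[of _ "m*dA" _ B dB] kron_carrier)
  moreover have "psd (m*dA*dB) (kron (kron (Q - P) A) B)"
    by (rule psd_kron[OF psd_kron[OF QP A] B])
  ultimately have "Re (qform (m*dA*dB) (kron (kron Q A) B - kron (kron P A) B) f) \<ge> 0"
    using psd_qform(2) by metis
  then show ?thesis
    using P Q cA cB by (simp add: qform_diff kron_carrier)
qed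

lemma qform_kron_kron_smult_add:
  assumes "R0 \<in> carrier_mat m m" "R1 \<in> carrier_mat m m" "A \<in> carrier_mat dA dA" "B \<in> carrier_mat dB dB"
  shows "qform (m*dA*dB) (kron (kron (c0 \<cdot>\<^sub>m R0 + c1 \<cdot>\<^sub>m R1) A) B) f =
    c0 * qform (m*dA*dB) (kron (kron R0 A) B) f + c1 * qform (m*dA*dB) (kron (kron R1 A) B) f"
  using assms
  by (simp add: kron_add_left[of _ m _ A dA] kron_smult_left[of _ m A dA]
      kron_add_left[of _ "m*dA" _ B dB] kron_smult_left[of _ "m*dA" B dB] kron_carrier qform_add qform_smult)

lemma qform_kron_kron_smult:
  assumes "R \<in> carrier_mat m m" "A \<in> carrier_mat dA dA" "B \<in> carrier_mat dB dB"
  shows "qform (m*dA*dB) (kron (kron (c \<cdot>\<^sub>m R) A) B) f = c * qform (m*dA*dB) (kron (kron R A) B) f"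
  using assms
  by (simp add: kron_smult_left[of _ m A dA] kron_smult_left[of _ "m*dA" B dB] kron_carrier qform_smult)

lemma qform_kron_kron_povms:
  assumes A: "povm dA Ans A" and B: "povm dB Ans B"
  shows "(\<Sum>c\<in>Ans. \<Sum>b\<in>Ans. Re (qform (m*dA*dB) (kron (kron (1\<^sub>m m) (A c)) (B b)) f)) = norm2 (m*dA*dB) f"
proof -
  have "(\<Sum>c\<in>Ans. \<Sum>b\<in>Ans. Re (qform (m*dA*dB) (kron (kron (1\<^sub>m m) (A c)) (B b)) f))
      = (\<Sum>c\<in>Ans. Re (qform (m*dA*dB) (kron (kron (1\<^sub>m m) (A c)) (1\<^sub>m dB)) f))"
    by (intro sum.cong refl)
      (simp add: kron_kron_povm_right[OF one_carrier_mat povm_carrier[OF A] B] qform_msum Re_sum)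
  also have "\<dots> = Re (qform (m*dA*dB) (kron (kron (1\<^sub>m m) (1\<^sub>m dA)) (1\<^sub>m dB)) f)"
    by (simp add: kron_kron_povm_middle[OF one_carrier_mat one_carrier_mat A] qform_msum Re_sum)
  also have "\<dots> = norm2 (m*dA*dB) f"
    by (simp add: kron_one qform_one)
  finally show ?thesis .
qed

lemma Re_qform_kron_kron_povm_right_le:
  assumes fin: "finite Ans" and c: "c \<in> Ans" and R: "psd m R" and A: "psd dA A"
    and B: "povm dB Ans B" and B': "povm dB Ans B'"
  shows "Re (qform (m*dA*dB) (kron (kron R A) (B c)) f)
    \<le> (\<Sum>b\<in>Ans. Re (qform (m*dA*dB) (kron (kron R A) (B' b)) f))"
proof (rule Re_qform_le_of_msum_eq[OF fin c, where F = "\<lambda>b. kron (kron R A) (B b)"])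
  show "psd (m*dA*dB) (kron (kron R A) (B b))" if "b \<in> Ans" for b
    by (intro psd_kron R A povm_psd[OF B that])
  show "msum (m*dA*dB) Ans (\<lambda>b. kron (kron R A) (B b)) = msum (m*dA*dB) Ans (\<lambda>b. kron (kron R A) (B' b))"
    using kron_kron_povm_right[OF psd_carrier[OF R] psd_carrier[OF A] B]
      kron_kron_povm_right[OF psd_carrier[OF R] psd_carrier[OF A] B'] by simp
qed

lemma Re_qform_kron_kron_povm_middle_le:
  assumes fin: "finite Ans" and c: "c \<in> Ans" and R: "psd m R" and B: "psd dB B"
    and A: "povm dA Ans A" and A': "povm dA Ans A'"
  shows "Re (qform (m*dA*dB) (kron (kron R (A c)) B) f)
    \<le> (\<Sum>a\<in>Ans. Re (qform (m*dA*dB) (kron (kron R (A' a)) B) f))"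
proof (rule Re_qform_le_of_msum_eq[OF fin c, where F = "\<lambda>a. kron (kron R (A a)) B"])
  show "psd (m*dA*dB) (kron (kron R (A a)) B)" if "a \<in> Ans" for a
    by (intro psd_kron R B povm_psd[OF A that])
  show "msum (m*dA*dB) Ans (\<lambda>a. kron (kron R (A a)) B) = msum (m*dA*dB) Ans (\<lambda>a. kron (kron R (A' a)) B)"
    using kron_kron_povm_middle[OF psd_carrier[OF R] psd_carrier[OF B] A]
      kron_kron_povm_middle[OF psd_carrier[OF R] psd_carrier[OF B] A'] by simp
qed

lemma Re_qform_kron_kron_combination_le:
  assumes R0: "R0 \<in> carrier_mat m m" and R1: "R1 \<in> carrier_mat m m"
    and gap: "psd m (complex_of_real V \<cdot>\<^sub>m 1\<^sub>m m - (complex_of_real p0 \<cdot>\<^sub>m R0 + complex_of_real p1 \<cdot>\<^sub>m R1))"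
    and A: "psd dA A" and B: "psd dB B"
  shows "p0 * Re (qform (m*dA*dB) (kron (kron R0 A) B) f) + p1 * Re (qform (m*dA*dB) (kron (kron R1 A) B) f)
    \<le> V * Re (qform (m*dA*dB) (kron (kron (1\<^sub>m m) A) B) f)"
proof -
  have cA: "A \<in> carrier_mat dA dA" and cB: "B \<in> carrier_mat dB dB" using A B psd_carrier by auto
  have "p0 * Re (qform (m*dA*dB) (kron (kron R0 A) B) f) + p1 * Re (qform (m*dA*dB) (kron (kron R1 A) B) f)
      = Re (qform (m*dA*dB) (kron (kron (complex_of_real p0 \<cdot>\<^sub>m R0 + complex_of_real p1 \<cdot>\<^sub>m R1) A) B) f)"
    by (simp add: qform_kron_kron_smult_add[OF R0 R1 cA cB])
  also have "\<dots> \<le> Re (qform (m*dA*dB) (kron (kron (complex_of_real V \<cdot>\<^sub>m 1\<^sub>m m) A) B) f)"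
    using R0 R1 by (intro Re_qform_kron_kron_mono gap A B) auto
  also have "\<dots> = V * Re (qform (m*dA*dB) (kron (kron (1\<^sub>m m) A) B) f)"
    by (simp add: qform_kron_kron_smult[OF one_carrier_mat cA cB])
  finally show ?thesis .
qed

lemma pure_strategy_bound:
  fixes f :: "nat \<Rightarrow> complex"
  assumes fin: "finite Ans"
    and R0: "povm m Ans R0" and R1: "povm m Ans R1"
    and A0: "povm dA Ans A0" and A1: "povm dA Ans A1"
    and B0: "povm dB Ans B0" and B1: "povm dB Ans B1"
    and gap: "\<And>c b. c \<in> Ans \<Longrightarrow> b \<in> Ans \<Longrightarrow>
      psd m (complex_of_real V \<cdot>\<^sub>m 1\<^sub>m m - (complex_of_real p0 \<cdot>\<^sub>m R0 c + complex_of_real p1 \<cdot>\<^sub>m R1 b))"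
    and p0: "p0 \<ge> 0" and p1: "p1 \<ge> 0"
  defines "Q \<equiv> \<lambda>R A B. Re (qform (m*dA*dB) (kron (kron R A) B) f)"
  shows "p0 * (\<Sum>c\<in>Ans. Q (R0 c) (A0 c) (B0 c)) + p1 * (\<Sum>b\<in>Ans. Q (R1 b) (A1 b) (B1 b))
    \<le> V * norm2 (m*dA*dB) f"
proof -
  have "p0 * (\<Sum>c\<in>Ans. Q (R0 c) (A0 c) (B0 c)) + p1 * (\<Sum>b\<in>Ans. Q (R1 b) (A1 b) (B1 b))
      \<le> p0 * (\<Sum>c\<in>Ans. \<Sum>b\<in>Ans. Q (R0 c) (A0 c) (B1 b)) + p1 * (\<Sum>b\<in>Ans. \<Sum>c\<in>Ans. Q (R1 b) (A0 c) (B1 b))"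
    unfolding Q_def using p0 p1
    by (intro add_mono mult_left_mono sum_mono Re_qform_kron_kron_povm_right_le
        Re_qform_kron_kron_povm_middle_le fin povm_psd[OF R0] povm_psd[OF A0] povm_psd[OF R1]
        povm_psd[OF B1] B0 B1 A1 A0)
  also have "\<dots> = (\<Sum>c\<in>Ans. \<Sum>b\<in>Ans. p0 * Q (R0 c) (A0 c) (B1 b) + p1 * Q (R1 b) (A0 c) (B1 b))"
    by (subst (2) sum.swap) (simp add: sum_distrib_left sum.distrib)
  also have "\<dots> \<le> (\<Sum>c\<in>Ans. \<Sum>b\<in>Ans. V * Q (1\<^sub>m m) (A0 c) (B1 b))"
    unfolding Q_def
    by (intro sum_mono Re_qform_kron_kron_combination_le povm_carrier[OF R0] povm_carrier[OF R1]
        gap povm_psd[OF A0] povm_psd[OF B1])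
  also have "\<dots> = V * norm2 (m*dA*dB) f"
    unfolding Q_def qform_kron_kron_povms[OF A0 B1, symmetric] by (simp add: sum_distrib_left)
  finally show ?thesis .
qed

definition point_povm :: "'a \<Rightarrow> 'a \<Rightarrow> complex mat" where
  "point_povm e a = (if a = e then 1\<^sub>m 1 else 0\<^sub>m 1 1)"

lemma povm_point_povm:
  assumes "finite Ans" "e \<in> Ans"
  shows "povm 1 Ans (point_povm e)"
  unfolding povm_def
proof
  show "\<forall>a\<in>Ans. psd 1 (point_povm e a)"
    unfolding point_povm_def using psd_one psd_zero by simp
  have "msum 1 Ans (point_povm e) $$ (0,0) = 1"
    using assms by (simp add: msum_index point_povm_def if_distrib[of "\<lambda>M. M $$ (0,0)"] cong: if_cong)
  then show "msum 1 Ans (point_povm e) = 1\<^sub>m 1"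
    by (intro eq_matI) auto
qed

lemma sum_point_povm_mtrace:
  assumes "finite Ans" "e \<in> Ans" "\<And>a. a \<in> Ans \<Longrightarrow> M a \<in> carrier_mat m m"
  shows "(\<Sum>a\<in>Ans. Re (mtrace (kron (kron (M a) (point_povm e a)) (point_povm e a) * rank1 m h)))
    = Re (qform m (M e) h)"
proof -
  have "kron (kron (M a) (point_povm e a)) (point_povm e a) = (if a = e then M a else 0\<^sub>m m m)"
    if "a \<in> Ans" for a
    unfolding point_povm_def
    using kron_one_right[OF assms(3)[OF that]] kron_zero_right[OF assms(3)[OF that]]
      kron_zero_right[OF zero_carrier_mat[of m m]]
    by (cases "a = e") (simp_all del: One_nat_def)
  then have "(\<Sum>a\<in>Ans. Re (mtrace (kron (kron (M a) (point_povm e a)) (point_povm e a) * rank1 m h)))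
      = (\<Sum>a\<in>Ans. if a = e then Re (qform m (M a) h) else 0)"
    using assms(2) by (intro sum.cong refl)
      (simp add: mtrace_mult_rank1[OF assms(3)] left_mult_zero_mat[OF rank1_carrier] mtrace_zero)
  then show ?thesis using assms(1,2) by simp
qed

lemma density_rank1: "norm2 n h = 1 \<Longrightarrow> density n (rank1 n h)"
  unfolding density_def by (simp add: psd_rank1 mtrace_rank1)

lemma fully_separable_1_1:
  assumes "density m \<rho>"
  shows "fully_separable m 1 1 \<rho>"
proof -
  have \<rho>: "\<rho> \<in> carrier_mat m m" using assms unfolding density_def by (simp add: psd_carrier)
  have "density 1 (1\<^sub>m 1)"
    unfolding density_def using psd_one by (simp add: mtrace_def)
  moreover have "\<rho> = msum (m*1*1) {..<1::nat}
      (\<lambda>j. complex_of_real 1 \<cdot>\<^sub>m kron (kron \<rho> (1\<^sub>m 1)) (1\<^sub>m 1))"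
    unfolding kron_one_right[OF \<rho>] using \<rho> by (intro eq_matI) (auto simp: msum_index)
  ultimately show ?thesis
    unfolding fully_separable_def using assms
    by (intro exI[of _ "1::nat"] exI[of _ "\<lambda>_. 1::real"] exI[of _ "\<lambda>_. \<rho>"] exI[of _ "\<lambda>_. 1\<^sub>m 1"]) simp
qed

section \<open>Games with two questions\<close>

lemma cSup_eq_cSup_of_subset:
  fixes S T :: "real set"
  assumes "S \<noteq> {}" "bdd_above S" "S \<subseteq> T" "\<And>t. t \<in> T \<Longrightarrow> t \<le> Sup S"
  shows "Sup T = Sup S"
proof (rule antisym)
  show "Sup T \<le> Sup S" using assms by (intro cSup_least) auto
  have "bdd_above T" using assms(4) unfolding bdd_above_def by blast
  then show "Sup S \<le> Sup T" by (rule cSup_subset_mono[OF assms(1) _ assms(3)])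
qed

locale two_question_moe_game =
  fixes X :: "'x set" and \<pi> :: "'x \<Rightarrow> real" and Ans :: "'a set" and m :: nat
    and R :: "'a \<Rightarrow> 'x \<Rightarrow> complex mat" and x0 x1 :: 'x
  assumes game: "moe_game X \<pi> Ans m R" and questions: "X = {x0, x1}" and distinct: "x0 \<noteq> x1"
begin

lemma finite_answers: "finite Ans" and answers_nonempty: "Ans \<noteq> {}" and dim_pos: "m > 0"
  and prob_nonneg: "\<pi> x0 \<ge> 0" "\<pi> x1 \<ge> 0"
  and povm_referee: "povm m Ans (\<lambda>a. R a x0)" "povm m Ans (\<lambda>a. R a x1)"
  using game questions unfolding moe_game_def by auto

text \<open>The supremum of these values is the operator-norm expression
  max_{c,b} \<parallel>p0 R(c|x0) + p1 R(b|x1)\<parallel> for the unentangled value.\<close>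

definition product_values :: "real set" where
  "product_values = {\<pi> x0 * Re (qform m (R c x0) h) + \<pi> x1 * Re (qform m (R b x1) h) | c b h.
     c \<in> Ans \<and> b \<in> Ans \<and> norm2 m h = 1}"

lemma product_values_nonempty: "product_values \<noteq> {}"
proof -
  obtain c where "c \<in> Ans" using answers_nonempty by blast
  moreover have "norm2 m (\<lambda>i. if i = 0 then 1 else 0) = 1"
    using dim_pos unfolding norm2_def by (simp add: if_distrib[of "\<lambda>z. (cmod z)\<^sup>2"] cong: if_cong)
  ultimately show ?thesis unfolding product_values_def by blast
qed

lemma bdd_above_product_values: "bdd_above product_values"
proof (rule bdd_aboveI)
  fix s assume "s \<in> product_values"
  then obtain c b h where s: "s = \<pi> x0 * Re (qform m (R c x0) h) + \<pi> x1 * Re (qform m (R b x1) h)"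
    and c: "c \<in> Ans" and b: "b \<in> Ans" and h: "norm2 m h = 1"
    unfolding product_values_def by blast
  have "Re (qform m (R c x0) h) \<le> 1"
    using Re_qform_povm_le_norm2[OF povm_referee(1) finite_answers c, where h = h] h by simp
  moreover have "Re (qform m (R b x1) h) \<le> 1"
    using Re_qform_povm_le_norm2[OF povm_referee(2) finite_answers b, where h = h] h by simp
  ultimately show "s \<le> \<pi> x0 + \<pi> x1"
    unfolding s using prob_nonneg by (intro add_mono) (simp_all add: mult_left_le)
qed

lemma product_value_bound:
  assumes c: "c \<in> Ans" and b: "b \<in> Ans"
  shows "\<pi> x0 * Re (qform m (R c x0) h) + \<pi> x1 * Re (qform m (R b x1) h) \<le> Sup product_values * norm2 m h"
proof (cases "norm2 m h = 0")
  case True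
  then show ?thesis by (simp add: qform_eq_0_if_norm2_eq_0)
next
  case False
  define N where "N = norm2 m h"
  have N: "N > 0" using False norm2_nonneg[of m h] unfolding N_def by linarith
  define h' where "h' = (\<lambda>i. complex_of_real (1 / sqrt N) * h i)"
  have "norm2 m h' = 1"
    unfolding h'_def norm2_scale N_def[symmetric] using N by (simp add: norm_divide power_divide)
  then have "\<pi> x0 * Re (qform m (R c x0) h') + \<pi> x1 * Re (qform m (R b x1) h') \<le> Sup product_values"
    using c b unfolding product_values_def by (intro cSup_upper bdd_above_product_values[unfolded product_values_def]) blast
  moreover have "qform m A h' = complex_of_real (1 / N) * qform m A h" for A
    unfolding h'_def qform_scale using N by (simp flip: of_real_mult)
  ultimately show ?thesis
    using N unfolding N_def[symmetric] by (simp add: field_simps)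
qed

lemma psd_product_value_gap:
  assumes "c \<in> Ans" "b \<in> Ans"
  shows "psd m (complex_of_real (Sup product_values) \<cdot>\<^sub>m 1\<^sub>m m -
    (complex_of_real (\<pi> x0) \<cdot>\<^sub>m R c x0 + complex_of_real (\<pi> x1) \<cdot>\<^sub>m R b x1))"
  using assms povm_psd[OF povm_referee(1)] povm_psd[OF povm_referee(2)] prob_nonneg
    psd_carrier[OF povm_psd[OF povm_referee(1)]] psd_carrier[OF povm_psd[OF povm_referee(2)]]
  by (intro psd_smult_one_diff psd_add psd_smult) (auto simp: qform_add qform_smult product_value_bound)

lemma win_prob_le_product_value:
  assumes strategy: "strategy X Ans m dA dB Aop Bop \<rho>"
  shows "win_prob X \<pi> Ans R Aop Bop \<rho> \<le> Sup product_values"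
proof -
  define N where "N = m*dA*dB"
  have dens: "density N \<rho>"
    and A: "povm dA Ans (Aop x0)" "povm dA Ans (Aop x1)" and B: "povm dB Ans (Bop x0)" "povm dB Ans (Bop x1)"
    using strategy questions unfolding strategy_def N_def by auto
  obtain K :: nat and w where \<rho>: "\<rho> = msum N {..<K} (\<lambda>l. rank1 N (w l))"
    and norm: "(\<Sum>l<K. norm2 N (w l)) = 1"
    using density_rank1_decomposition[OF dens] by blast
  define Q where "Q = (\<lambda>x a l. Re (qform N (kron (kron (R a x) (Aop x a)) (Bop x a)) (w l)))"
  have "kron (kron (R a x) (Aop x a)) (Bop x a) \<in> carrier_mat N N" if "x \<in> X" "a \<in> Ans" for x a
    using that strategy game unfolding N_def strategy_def moe_game_def
    by (intro kron_carrier povm_carrier[of _ Ans]) auto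
  then have "win_prob X \<pi> Ans R Aop Bop \<rho> = (\<Sum>x\<in>X. \<pi> x * (\<Sum>a\<in>Ans. \<Sum>l<K. Q x a l))"
    unfolding win_prob_def \<rho> Q_def by (intro sum.cong refl) (simp add: Re_mtrace_mult_rank1_sum)
  also have "\<dots> = (\<Sum>l<K. \<pi> x0 * (\<Sum>a\<in>Ans. Q x0 a l) + \<pi> x1 * (\<Sum>a\<in>Ans. Q x1 a l))"
    unfolding questions using distinct by (simp add: sum.swap[of _ Ans] sum_distrib_left sum.distrib)
  also have "\<dots> \<le> (\<Sum>l<K. Sup product_values * norm2 N (w l))"
    unfolding Q_def N_def
    by (intro sum_mono pure_strategy_bound finite_answers povm_referee A B prob_nonneg psd_product_value_gap)
  also have "\<dots> = Sup product_values" using norm by (simp flip: sum_distrib_left)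
  finally show ?thesis .
qed

lemma product_values_subset_unentangled:
  "product_values \<subseteq> {win_prob X \<pi> Ans R Aop Bop \<rho> | dA dB Aop Bop \<rho>.
     strategy X Ans m dA dB Aop Bop \<rho> \<and> fully_separable m dA dB \<rho>}"
proof
  fix s assume "s \<in> product_values"
  then obtain c b h where s: "s = \<pi> x0 * Re (qform m (R c x0) h) + \<pi> x1 * Re (qform m (R b x1) h)"
    and c: "c \<in> Ans" and b: "b \<in> Ans" and h: "norm2 m h = 1"
    unfolding product_values_def by blast
  define P where "P = (\<lambda>x. point_povm (if x = x0 then c else b))"
  have "strategy X Ans m 1 1 P P (rank1 m h)"
    unfolding strategy_def P_def using density_rank1[OF h] povm_point_povm[OF finite_answers] c b by auto
  moreover have "fully_separable m 1 1 (rank1 m h)"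
    by (rule fully_separable_1_1[OF density_rank1[OF h]])
  moreover have "win_prob X \<pi> Ans R P P (rank1 m h) = s"
    unfolding win_prob_def questions s P_def using distinct c b finite_answers
      povm_carrier[OF povm_referee(1)] povm_carrier[OF povm_referee(2)]
    by (simp add: sum_point_povm_mtrace)
  ultimately show "s \<in> {win_prob X \<pi> Ans R Aop Bop \<rho> | dA dB Aop Bop \<rho>.
      strategy X Ans m dA dB Aop Bop \<rho> \<and> fully_separable m dA dB \<rho>}"
    by blast
qed

end

theorem mainTheorem3:
  fixes X :: "'x set" and \<pi> :: "'x \<Rightarrow> real" and Ans :: "'a set" and m :: nat
    and R :: "'a \<Rightarrow> 'x \<Rightarrow> complex mat"
  assumes "moe_game X \<pi> Ans m R"
    and "card X = 2"
  shows "unentangled_value X \<pi> Ans m R = quantum_value X \<pi> Ans m R"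
proof -
  obtain x0 x1 where "X = {x0, x1}" "x0 \<noteq> x1" using assms(2) unfolding card_2_iff by blast
  then interpret two_question_moe_game X \<pi> Ans m R x0 x1 using assms(1) by unfold_locales
  have unentangled: "product_values \<subseteq> {win_prob X \<pi> Ans R Aop Bop \<rho> | dA dB Aop Bop \<rho>.
      strategy X Ans m dA dB Aop Bop \<rho> \<and> fully_separable m dA dB \<rho>}"
    by (rule product_values_subset_unentangled)
  then have quantum: "product_values \<subseteq>
      {win_prob X \<pi> Ans R Aop Bop \<rho> | dA dB Aop Bop \<rho>. strategy X Ans m dA dB Aop Bop \<rho>}"
    by blast
  have "unentangled_value X \<pi> Ans m R = Sup product_values"
    unfolding unentangled_value_def
    by (rule cSup_eq_cSup_of_subset[OF product_values_nonempty bdd_above_product_values unentangled])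
      (auto intro: win_prob_le_product_value)
  moreover have "quantum_value X \<pi> Ans m R = Sup product_values"
    unfolding quantum_value_def
    by (rule cSup_eq_cSup_of_subset[OF product_values_nonempty bdd_above_product_values quantum])
      (auto intro: win_prob_le_product_value)
  ultimately show ?thesis by simp
qed

end
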